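(* A $T_1$-space $X$ has a regular base at non-isolated points if and only if $X$ has a strong development at non-isolated points.
   Context: $I(X)$ is the set of isolated points of $X$, $\mathcal{I}(X)=\{\{x\}:x\in I(X)\}$, $\mathrm{st}(A,\mathcal{W})=\bigcup\{W\in\mathcal{W}:W\cap A\neq\emptyset\}$. A base $\mathcal{B}$ is regular at $x$ if for every neighborhood $U$ of $x$ there is an open $V$ with $x\in V\subset U$ such that $\{B\in\mathcal{B}: B\cap V\neq\emptyset,\ B\not\subset U\}$ is finite; it is a regular base at non-isolated points if it is regular at every $x\in X\setminus I(X)$. A sequence $\{\mathcal{W}_i\}_{i\in\mathbb{N}}$ of open covers of $X$ with $\mathcal{I}(X)\subset\bigcup_i\mathcal{W}_i$ is a strong development at non-isolated points if for every $x\in X\setminus I(X)$ and every neighborhood $U$ of $x$ there are a neighborhood $V$ of $x$ and $i\in\mathbb{N}$ with $\mathrm{st}(V,\mathcal{W}_i)\subset U$. *)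

theory Defs
  imports "HOL-Analysis.Analysis"
begin

definition isolated_pts :: "'a topology \<Rightarrow> 'a set" where
  "isolated_pts X = {x \<in> topspace X. openin X {x}}"

definition nbhd :: "'a topology \<Rightarrow> 'a \<Rightarrow> 'a set \<Rightarrow> bool" where
  "nbhd X x N \<longleftrightarrow> N \<subseteq> topspace X \<and> (\<exists>W. openin X W \<and> x \<in> W \<and> W \<subseteq> N)"

definition is_base :: "'a topology \<Rightarrow> 'a set set \<Rightarrow> bool" where
  "is_base X \<B> \<longleftrightarrow> (\<forall>B\<in>\<B>. openin X B) \<and>
     (\<forall>U x. openin X U \<and> x \<in> U \<longrightarrow> (\<exists>B\<in>\<B>. x \<in> B \<and> B \<subseteq> U))"

definition regular_at :: "'a topology \<Rightarrow> 'a set set \<Rightarrow> 'a \<Rightarrow> bool" where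
  "regular_at X \<B> x \<longleftrightarrow> (\<forall>U. nbhd X x U \<longrightarrow>
     (\<exists>V. openin X V \<and> x \<in> V \<and> V \<subseteq> U \<and>
          finite {B \<in> \<B>. B \<inter> V \<noteq> {} \<and> \<not> B \<subseteq> U}))"

definition has_regular_base_nonisol :: "'a topology \<Rightarrow> bool" where
  "has_regular_base_nonisol X \<longleftrightarrow> (\<exists>\<B>. is_base X \<B> \<and>
     (\<forall>x \<in> topspace X - isolated_pts X. regular_at X \<B> x))"

definition star :: "'a set \<Rightarrow> 'a set set \<Rightarrow> 'a set" where
  "star A \<W> = \<Union>{W \<in> \<W>. W \<inter> A \<noteq> {}}"

definition open_cover :: "'a topology \<Rightarrow> 'a set set \<Rightarrow> bool" where
  "open_cover X \<W> \<longleftrightarrow> (\<forall>W\<in>\<W>. openin X W) \<and> \<Union>\<W> = topspace X"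

definition strong_dev_nonisol :: "'a topology \<Rightarrow> (nat \<Rightarrow> 'a set set) \<Rightarrow> bool" where
  "strong_dev_nonisol X \<W> \<longleftrightarrow> (\<forall>i. open_cover X (\<W> i)) \<and>
     (\<forall>x \<in> isolated_pts X. {x} \<in> (\<Union>i. \<W> i)) \<and>
     (\<forall>x \<in> topspace X - isolated_pts X. \<forall>U. nbhd X x U \<longrightarrow>
        (\<exists>V i. nbhd X x V \<and> star V (\<W> i) \<subseteq> U))"

definition has_strong_dev_nonisol :: "'a topology \<Rightarrow> bool" where
  "has_strong_dev_nonisol X \<longleftrightarrow> (\<exists>\<W>. strong_dev_nonisol X \<W>)"

end

theory Submission
  imports Defs
begin

(*
  (==>) Let B be a base that is regular at the non-isolated points.  In a T1 space
  an open set containing a non-isolated point x has only finitely many supersets in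
  B (apply regularity at x to the neighbourhood X - {z} for some z <> x in the set),
  yet x lies in basic sets with arbitrarily many basic supersets.  The n-th cover
  consists of the basic sets with at least n basic supersets together with the
  isolated singletons; regularity at x bounds the number of supersets of the
  finitely many "bad" basic sets, which yields the strong development property.

  (<==) Replacing the n-th cover by the meets of the first n+1 covers gives a strong
  development in which every cover refines the earlier ones (locale refining_dev).
  In that setting a Stone-type construction (locale stone_refinement) shows that
  every open cover has an open refinement covering the non-isolated points and
  locally finite at them.  Such refinements of all covers of the development,
  together with the isolated singletons, form a base regular at non-isolated points.
*)


lemma nbhd_openin: "openin X U \<Longrightarrow> x \<in> U \<Longrightarrow> nbhd X x U"
  unfolding nbhd_def using openin_subset by blast

lemma nbhd_mem: "nbhd X x U \<Longrightarrow> x \<in> U"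
  unfolding nbhd_def by blast

lemma openin_isolated_singleton: "y \<in> isolated_pts X \<Longrightarrow> openin X {y}"
  unfolding isolated_pts_def by blast

lemma nonisolated_other_point:
  assumes "x \<in> topspace X - isolated_pts X" and "openin X B" and "x \<in> B"
  shows "\<exists>z\<in>B. z \<noteq> x"
proof (rule ccontr)
  assume "\<not> ?thesis"
  then have "B = {x}" using assms(3) by blast
  then show False using assms(1,2) unfolding isolated_pts_def by auto
qed

definition refines :: "'a set set \<Rightarrow> 'a set set \<Rightarrow> bool" where
  "refines \<A> \<B> \<longleftrightarrow> (\<forall>A\<in>\<A>. \<exists>B\<in>\<B>. A \<subseteq> B)"

lemma refines_refl: "refines \<A> \<A>"
  unfolding refines_def by blast

lemma refines_trans: "refines \<A> \<B> \<Longrightarrow> refines \<B> \<C> \<Longrightarrow> refines \<A> \<C>"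
  unfolding refines_def by (meson subset_trans)

lemma star_mono: "A \<subseteq> B \<Longrightarrow> star A \<G> \<subseteq> star B \<G>"
  unfolding star_def by blast

lemma star_refines: "refines \<G> \<H> \<Longrightarrow> star A \<G> \<subseteq> star A \<H>"
  unfolding star_def refines_def by blast

lemma member_subset_star: "W \<in> \<G> \<Longrightarrow> W \<inter> A \<noteq> {} \<Longrightarrow> W \<subseteq> star A \<G>"
  unfolding star_def by blast

lemma subset_star: "A \<subseteq> \<Union>\<G> \<Longrightarrow> A \<subseteq> star A \<G>"
  unfolding star_def by blast

lemma star_subset_star_star: "star A \<G> \<subseteq> star (star A \<G>) \<G>"
  unfolding star_def by blast

lemma openin_star: "(\<And>W. W \<in> \<G> \<Longrightarrow> openin X W) \<Longrightarrow> openin X (star A \<G>)"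
  unfolding star_def by blast

text \<open>Two points whose stars are linked by a chain of two further stars lie within
  four stars of each other; this is what makes the Stone construction disjoint.\<close>
lemma star_chain:
  assumes "z \<in> star {x} \<G>" "z \<in> star {y} \<G>" "z' \<in> star {y} \<G>" "z' \<in> star {x'} \<G>"
  shows "x' \<in> star (star (star (star {x} \<G>) \<G>) \<G>) \<G>"
proof -
  obtain W where "W \<in> \<G>" "y \<in> W" "z \<in> W" using assms(2) unfolding star_def by blast
  then have y: "y \<in> star (star {x} \<G>) \<G>" using member_subset_star assms(1) by blast
  obtain W' where "W' \<in> \<G>" "y \<in> W'" "z' \<in> W'" using assms(3) unfolding star_def by blast
  then have z': "z' \<in> star (star (star {x} \<G>) \<G>) \<G>" using member_subset_star y by blast
  obtain W'' where "W'' \<in> \<G>" "x' \<in> W''" "z' \<in> W''" using assms(4) unfolding star_def by blast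
  then show ?thesis using member_subset_star z' by blast
qed

lemma finite_image_unique:
  assumes "\<And>a b. P a \<Longrightarrow> P b \<Longrightarrow> a = b"
  shows "finite {f a | a. P a}"
proof (cases "\<exists>a. P a")
  case True
  then obtain b where "P b" by blast
  then have "{f a | a. P a} = {f b}" using assms by blast
  then show ?thesis by simp
next
  case False
  then show ?thesis by simp
qed


subsection \<open>From a regular base to a strong development\<close>

definition supersets :: "'a set set \<Rightarrow> 'a set \<Rightarrow> 'a set set" where
  "supersets \<B> B = {B' \<in> \<B>. B \<subseteq> B'}"

lemma finite_supersets:
  assumes t1: "t1_space X" and reg: "regular_at X \<B> x"
    and x: "x \<in> topspace X - isolated_pts X" and B: "openin X B" "x \<in> B"
  shows "finite (supersets \<B> B)"
proof -
  obtain z where z: "z \<in> B" "z \<noteq> x" using nonisolated_other_point[OF x B] by blast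
  have "openin X (topspace X - {z})" using t1 by (simp add: t1_space_openin_delete_alt)
  then have "nbhd X x (topspace X - {z})" using x z by (intro nbhd_openin) auto
  then obtain V where V: "x \<in> V" "V \<subseteq> topspace X - {z}"
    and fin: "finite {B' \<in> \<B>. B' \<inter> V \<noteq> {} \<and> \<not> B' \<subseteq> topspace X - {z}}"
    using reg unfolding regular_at_def by blast
  have "supersets \<B> B \<subseteq> {B' \<in> \<B>. B' \<inter> V \<noteq> {} \<and> \<not> B' \<subseteq> topspace X - {z}}"
    unfolding supersets_def using V z B(2) by blast
  then show ?thesis using fin by (rule finite_subset)
qed

text \<open>A non-isolated point lies in basic sets with arbitrarily many basic supersets:
  shrink a basic set around x so as to exclude one of its points.\<close>
lemma unbounded_supersets:
  assumes t1: "t1_space X" and base: "is_base X \<B>" and reg: "regular_at X \<B> x"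
    and x: "x \<in> topspace X - isolated_pts X"
  shows "\<exists>B\<in>\<B>. x \<in> B \<and> n \<le> card (supersets \<B> B)"
proof (induction n)
  case 0
  show ?case using base x openin_topspace unfolding is_base_def by blast
next
  case (Suc n)
  then obtain B where B: "B \<in> \<B>" "x \<in> B" "n \<le> card (supersets \<B> B)" by blast
  have B_open: "openin X B" using base B(1) unfolding is_base_def by blast
  obtain z where z: "z \<in> B" "z \<noteq> x" using nonisolated_other_point[OF x B_open B(2)] by blast
  have "openin X (B - {z})" using t1 B_open by (simp add: t1_space_openin_delete_alt)
  then obtain B' where B': "B' \<in> \<B>" "x \<in> B'" "B' \<subseteq> B - {z}"
    using base z B(2) unfolding is_base_def by blast
  have B'_open: "openin X B'" using base B'(1) unfolding is_base_def by blast
  have sub: "insert B' (supersets \<B> B) \<subseteq> supersets \<B> B'"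
    unfolding supersets_def using B' by auto
  have new: "B' \<notin> supersets \<B> B" unfolding supersets_def using B' z by auto
  have "Suc n \<le> card (insert B' (supersets \<B> B))"
    using finite_supersets[OF t1 reg x B_open B(2)] new B(3) by simp
  also have "\<dots> \<le> card (supersets \<B> B')"
    using finite_supersets[OF t1 reg x B'_open B'(2)] sub by (rule card_mono)
  finally show ?case using B' by blast
qed

definition level_cover :: "'a topology \<Rightarrow> 'a set set \<Rightarrow> nat \<Rightarrow> 'a set set" where
  "level_cover X \<B> n =
     {B \<in> \<B>. n \<le> card (supersets \<B> B)} \<union> {{y} | y. y \<in> isolated_pts X}"

lemma open_cover_level_cover:
  assumes t1: "t1_space X" and base: "is_base X \<B>"
    and reg: "\<And>x. x \<in> topspace X - isolated_pts X \<Longrightarrow> regular_at X \<B> x"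
  shows "open_cover X (level_cover X \<B> n)"
proof -
  have open_members: "openin X W" if "W \<in> level_cover X \<B> n" for W
    using that base openin_isolated_singleton unfolding level_cover_def is_base_def by auto
  have "x \<in> \<Union>(level_cover X \<B> n)" if x: "x \<in> topspace X" for x
  proof (cases "x \<in> isolated_pts X")
    case True
    then show ?thesis unfolding level_cover_def by blast
  next
    case False
    then show ?thesis
      using unbounded_supersets[OF t1 base reg, of x n] x unfolding level_cover_def by blast
  qed
  then show ?thesis
    unfolding open_cover_def using open_members openin_subset by blast
qed

text \<open>Regularity at x gives the strong development property at x: a basic set in a
  high enough level meeting a suitable V is not one of the finitely many bad sets.\<close>
lemma star_level_cover_subset:
  assumes reg: "regular_at X \<B> x" and U: "nbhd X x U"
  shows "\<exists>V n. nbhd X x V \<and> star V (level_cover X \<B> n) \<subseteq> U"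
proof -
  define F where "F V = {B \<in> \<B>. B \<inter> V \<noteq> {} \<and> \<not> B \<subseteq> U}" for V
  obtain V where V: "openin X V" "x \<in> V" "V \<subseteq> U" and fin: "finite (F V)"
    using reg U unfolding regular_at_def F_def by blast
  define n where "n = Suc (\<Sum>B\<in>F V. card (supersets \<B> B))"
  have "T \<subseteq> U" if T: "T \<in> level_cover X \<B> n" "T \<inter> V \<noteq> {}" for T
  proof (cases "T \<in> \<B> \<and> n \<le> card (supersets \<B> T)")
    case True
    show ?thesis
    proof (rule ccontr)
      assume "\<not> T \<subseteq> U"
      then have "T \<in> F V" unfolding F_def using True T(2) by blast
      then have "card (supersets \<B> T) \<le> (\<Sum>B\<in>F V. card (supersets \<B> B))"
        using fin by (intro member_le_sum) auto
      then show False using True unfolding n_def by simp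
    qed
  next
    case False
    then obtain y where "T = {y}" using T(1) unfolding level_cover_def by blast
    then show ?thesis using T(2) V(3) by blast
  qed
  then have "star V (level_cover X \<B> n) \<subseteq> U" unfolding star_def by blast
  then show ?thesis using nbhd_openin[OF V(1,2)] by blast
qed

lemma regular_base_imp_strong_dev:
  assumes t1: "t1_space X" and "has_regular_base_nonisol X"
  shows "has_strong_dev_nonisol X"
proof -
  obtain \<B> where base: "is_base X \<B>"
    and reg: "\<And>x. x \<in> topspace X - isolated_pts X \<Longrightarrow> regular_at X \<B> x"
    using assms(2) unfolding has_regular_base_nonisol_def by blast
  have "strong_dev_nonisol X (level_cover X \<B>)"
    unfolding strong_dev_nonisol_def
  proof (intro conjI ballI allI impI)
    show "open_cover X (level_cover X \<B> i)" for i
      using t1 base reg by (rule open_cover_level_cover)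
    show "{x} \<in> (\<Union>i. level_cover X \<B> i)" if "x \<in> isolated_pts X" for x
      using that unfolding level_cover_def by blast
    show "\<exists>V i. nbhd X x V \<and> star V (level_cover X \<B> i) \<subseteq> U"
      if "x \<in> topspace X - isolated_pts X" "nbhd X x U" for x U
      using star_level_cover_subset[OF reg[OF that(1)] that(2)] .
  qed
  then show ?thesis unfolding has_strong_dev_nonisol_def by blast
qed


subsection \<open>Strong developments whose covers refine each other\<close>

locale refining_dev =
  fixes X :: "'a topology" and G :: "nat \<Rightarrow> 'a set set"
  assumes openin_G: "\<And>n W. W \<in> G n \<Longrightarrow> openin X W"
    and cover_G: "\<And>n. \<Union>(G n) = topspace X"
    and refines_G: "\<And>n m. n \<le> m \<Longrightarrow> refines (G m) (G n)"
    and strong_G: "\<And>x U. x \<in> topspace X - isolated_pts X \<Longrightarrow> nbhd X x U \<Longrightarrow>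
               \<exists>V i. nbhd X x V \<and> star V (G i) \<subseteq> U"

text \<open>Taking meets of the first n+1 covers turns any strong development into one
  whose covers refine each other.\<close>
primrec meets :: "(nat \<Rightarrow> 'a set set) \<Rightarrow> nat \<Rightarrow> 'a set set" where
  "meets \<W> 0 = \<W> 0"
| "meets \<W> (Suc n) = {A \<inter> W | A W. A \<in> meets \<W> n \<and> W \<in> \<W> (Suc n)}"

lemma meets_Suc_refines: "refines (meets \<W> (Suc n)) (meets \<W> n)"
  unfolding refines_def by auto

lemma meets_refines: "i \<le> n \<Longrightarrow> refines (meets \<W> n) (\<W> i)"
proof (induction n)
  case 0
  then show ?case by (simp add: refines_refl)
next
  case (Suc n)
  show ?case
  proof (cases "i = Suc n")
    case True
    then show ?thesis unfolding refines_def by auto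
  next
    case False
    then have "refines (meets \<W> n) (\<W> i)" using Suc by simp
    with meets_Suc_refines show ?thesis by (rule refines_trans)
  qed
qed

lemma meets_antitone: "n \<le> m \<Longrightarrow> refines (meets \<W> m) (meets \<W> n)"
proof (induction m rule: dec_induct)
  case base
  then show ?case by (rule refines_refl)
next
  case (step m)
  show ?case using meets_Suc_refines step.IH by (rule refines_trans)
qed

lemma open_cover_meets:
  assumes "\<And>i. open_cover X (\<W> i)"
  shows "open_cover X (meets \<W> n)"
proof (induction n)
  case 0
  then show ?case using assms by simp
next
  case (Suc n)
  have W: "\<forall>W\<in>\<W> (Suc n). openin X W" "\<Union>(\<W> (Suc n)) = topspace X"
    using assms unfolding open_cover_def by blast+
  have A: "\<forall>A\<in>meets \<W> n. openin X A" "\<Union>(meets \<W> n) = topspace X"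
    using Suc.IH unfolding open_cover_def by blast+
  have "topspace X \<subseteq> \<Union>(meets \<W> (Suc n))"
  proof
    fix x assume x: "x \<in> topspace X"
    then obtain A W where "A \<in> meets \<W> n" "W \<in> \<W> (Suc n)" "x \<in> A" "x \<in> W"
      using A(2) W(2) by blast
    then show "x \<in> \<Union>(meets \<W> (Suc n))" by auto
  qed
  moreover have "\<forall>T\<in>meets \<W> (Suc n). openin X T" using A(1) W(1) by auto
  ultimately show ?case unfolding open_cover_def using openin_subset by blast
qed

lemma strong_dev_refining_dev:
  assumes "strong_dev_nonisol X \<W>"
  shows "refining_dev X (meets \<W>)"
proof -
  have cov: "open_cover X (meets \<W> n)" for n
    using assms open_cover_meets unfolding strong_dev_nonisol_def by blast
  show ?thesis
  proof
    show "openin X W" if "W \<in> meets \<W> n" for n W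
      using cov that unfolding open_cover_def by blast
    show "\<Union>(meets \<W> n) = topspace X" for n
      using cov unfolding open_cover_def by blast
    show "refines (meets \<W> m) (meets \<W> n)" if "n \<le> m" for n m
      using that by (rule meets_antitone)
    fix x U assume "x \<in> topspace X - isolated_pts X" "nbhd X x U"
    then obtain V i where "nbhd X x V" "star V (\<W> i) \<subseteq> U"
      using assms unfolding strong_dev_nonisol_def by blast
    then show "\<exists>V i. nbhd X x V \<and> star V (meets \<W> i) \<subseteq> U"
      using star_refines[OF meets_refines[of i i \<W>]] by blast
  qed
qed

context refining_dev
begin

lemma star_antimono: "n \<le> m \<Longrightarrow> star A (G m) \<subseteq> star A (G n)"
  using refines_G by (rule star_refines)

lemma late_member_subset_star:
  assumes "m \<le> k" and "T \<in> G k" and "T \<inter> V \<noteq> {}"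
  shows "T \<subseteq> star V (G m)"
proof -
  obtain T' where T': "T' \<in> G m" "T \<subseteq> T'"
    using refines_G[OF assms(1)] assms(2) unfolding refines_def by blast
  then have "T' \<subseteq> star V (G m)" using assms(3) by (intro member_subset_star) auto
  then show ?thesis using T'(2) by (rule order_trans[rotated])
qed

lemma eventually_star_subset:
  assumes "x \<in> topspace X - isolated_pts X" and "nbhd X x U"
  shows "\<exists>V m. nbhd X x V \<and> (\<forall>m'\<ge>m. star V (G m') \<subseteq> U)"
proof -
  obtain V i where V: "nbhd X x V" "star V (G i) \<subseteq> U" using strong_G[OF assms] by blast
  have "star V (G m') \<subseteq> U" if "m' \<ge> i" for m'
    using star_antimono[OF that, of V] V(2) by (rule order_trans)
  then show ?thesis using V(1) by blast
qed

lemma eventually_star_star_subset: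
  assumes x: "x \<in> topspace X - isolated_pts X" and U: "nbhd X x U"
  shows "\<exists>V m. nbhd X x V \<and> (\<forall>m'\<ge>m. star (star V (G m')) (G m') \<subseteq> U)"
proof -
  obtain V1 m1 where V1: "nbhd X x V1" "\<And>m'. m' \<ge> m1 \<Longrightarrow> star V1 (G m') \<subseteq> U"
    using eventually_star_subset[OF x U] by blast
  obtain V2 m2 where V2: "nbhd X x V2" "\<And>m'. m' \<ge> m2 \<Longrightarrow> star V2 (G m') \<subseteq> V1"
    using eventually_star_subset[OF x V1(1)] by blast
  have "star (star V2 (G m')) (G m') \<subseteq> U" if "m' \<ge> max m1 m2" for m'
  proof -
    have "star (star V2 (G m')) (G m') \<subseteq> star V1 (G m')"
      using V2(2) that by (intro star_mono) simp
    also have "\<dots> \<subseteq> U" using V1(2) that by simp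
    finally show ?thesis .
  qed
  then show ?thesis using V2(1) by blast
qed

definition star_pt :: "nat \<Rightarrow> 'a \<Rightarrow> 'a set" where
  "star_pt n x = star {x} (G n)"

definition star4_pt :: "nat \<Rightarrow> 'a \<Rightarrow> 'a set" where
  "star4_pt n x = star (star (star (star_pt n x) (G n)) (G n)) (G n)"

lemma openin_star_pt: "openin X (star_pt n x)"
  unfolding star_pt_def using openin_G by (rule openin_star)

lemma mem_star_pt: "x \<in> topspace X \<Longrightarrow> x \<in> star_pt n x"
  unfolding star_pt_def using subset_star[of "{x}" "G n"] cover_G by blast

lemma star_pt_subset_star4_pt: "star_pt n x \<subseteq> star4_pt n x"
proof -
  have "star_pt n x \<subseteq> star (star_pt n x) (G n)"
    unfolding star_pt_def by (rule star_subset_star_star)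
  also have "\<dots> \<subseteq> star (star (star_pt n x) (G n)) (G n)" by (rule star_subset_star_star)
  also have "\<dots> \<subseteq> star4_pt n x" unfolding star4_pt_def by (rule star_subset_star_star)
  finally show ?thesis .
qed

lemma star_pt_antimono: "n \<le> m \<Longrightarrow> star_pt m x \<subseteq> star_pt n x"
  unfolding star_pt_def by (rule star_antimono)

lemma small_star4_pt:
  assumes x: "x \<in> topspace X - isolated_pts X" and U: "nbhd X x U"
  shows "\<exists>m. star4_pt m x \<subseteq> U"
proof -
  obtain V1 m1 where V1: "nbhd X x V1" "\<And>m'. m' \<ge> m1 \<Longrightarrow> star (star V1 (G m')) (G m') \<subseteq> U"
    using eventually_star_star_subset[OF x U] by blast
  obtain V2 m2 where V2: "nbhd X x V2" "\<And>m'. m' \<ge> m2 \<Longrightarrow> star (star V2 (G m')) (G m') \<subseteq> V1"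
    using eventually_star_star_subset[OF x V1(1)] by blast
  define m where "m = max m1 m2"
  have "{x} \<subseteq> V2" using nbhd_mem[OF V2(1)] by simp
  then have "star (star {x} (G m)) (G m) \<subseteq> star (star V2 (G m)) (G m)" by (intro star_mono)
  also have "\<dots> \<subseteq> V1" using V2(2) unfolding m_def by simp
  finally have "star4_pt m x \<subseteq> star (star V1 (G m)) (G m)"
    unfolding star4_pt_def star_pt_def by (intro star_mono)
  also have "\<dots> \<subseteq> U" using V1(2) unfolding m_def by simp
  finally show ?thesis by blast
qed

end


subsection \<open>Stone's construction of locally finite refinements\<close>

definition locally_finite_nonisol :: "'a topology \<Rightarrow> 'a set set \<Rightarrow> bool" where
  "locally_finite_nonisol X \<R> \<longleftrightarrow> (\<forall>x\<in>topspace X - isolated_pts X.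
     \<exists>Q. openin X Q \<and> x \<in> Q \<and> finite {B \<in> \<R>. B \<inter> Q \<noteq> {}})"

text \<open>Every family admits a choice of members c x \<ni> x that is coherent: if two points
  lie in each other's chosen set, they chose the same set.  Choose minimally with
  respect to a well-ordering.\<close>
lemma coherent_choice:
  "\<exists>c. (\<forall>x\<in>\<Union>\<C>. c x \<in> \<C> \<and> x \<in> c x) \<and>
       (\<forall>x x'. x \<in> \<Union>\<C> \<longrightarrow> x' \<in> \<Union>\<C> \<longrightarrow> x' \<in> c x \<longrightarrow> x \<in> c x' \<longrightarrow> c x = c x')"
proof -
  obtain r :: "'a set rel" where r: "Well_order r" "Field r = UNIV"
    using well_ordering[where 'a="'a set"] by blast
  have wo: "wo_rel r" using r(1) by (simp add: wo_rel_def)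
  define c where "c x = wo_rel.minim r {a \<in> \<C>. x \<in> a}" for x
  have c_mem: "c x \<in> \<C> \<and> x \<in> c x" if "x \<in> \<Union>\<C>" for x
  proof -
    have "c x \<in> {a \<in> \<C>. x \<in> a}" unfolding c_def
      by (rule wo_rel.minim_in[OF wo]) (use that r(2) in auto)
    then show ?thesis by simp
  qed
  have c_least: "(c x, b) \<in> r" if "b \<in> \<C>" "x \<in> b" for x b
    unfolding c_def by (rule wo_rel.minim_least[OF wo]) (use that r(2) in auto)
  have "c x = c x'" if "x \<in> \<Union>\<C>" "x' \<in> \<Union>\<C>" "x' \<in> c x" "x \<in> c x'" for x x'
    using c_least[of "c x" x'] c_least[of "c x'" x] c_mem that
      wo_rel.ANTISYM[OF wo] unfolding antisym_def by blast
  then show ?thesis using c_mem by blast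
qed

text \<open>Stage n of the construction: the centres are the points not yet covered whose
  fourfold star lies in their chosen set; each piece collects the stars of the centres
  with a common chosen set.  Centres of later stages avoid earlier stars.\<close>
locale stone_refinement = refining_dev +
  fixes \<C> :: "'a set set" and c :: "'a \<Rightarrow> 'a set"
  assumes openin_C: "\<And>U. U \<in> \<C> \<Longrightarrow> openin X U"
    and c_mem: "\<And>x. x \<in> topspace X \<Longrightarrow> c x \<in> \<C> \<and> x \<in> c x"
    and c_coherent: "\<And>x x'. x \<in> topspace X \<Longrightarrow> x' \<in> topspace X \<Longrightarrow>
        x' \<in> c x \<Longrightarrow> x \<in> c x' \<Longrightarrow> c x = c x'"
begin

primrec claimed :: "nat \<Rightarrow> 'a set" where
  "claimed 0 = {}"
| "claimed (Suc n) = claimed n \<union>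
     \<Union>(star_pt n ` {x \<in> topspace X. x \<notin> claimed n \<and> star4_pt n x \<subseteq> c x})"

definition centres :: "nat \<Rightarrow> 'a set" where
  "centres n = {x \<in> topspace X. x \<notin> claimed n \<and> star4_pt n x \<subseteq> c x}"

definition piece :: "'a set \<Rightarrow> nat \<Rightarrow> 'a set" where
  "piece a n = \<Union>(star_pt n ` {x \<in> centres n. c x = a})"

definition pieces :: "'a set set" where
  "pieces = {piece a n | a n. a \<in> \<C>}"

lemma claimed_mono: "n \<le> m \<Longrightarrow> claimed n \<subseteq> claimed m"
  by (induction m rule: dec_induct) auto

lemma star_pt_centre_claimed: "x \<in> centres n \<Longrightarrow> star_pt n x \<subseteq> claimed (Suc n)"
  unfolding centres_def by auto

lemma claimed_in_star_pt: "y \<in> claimed n \<Longrightarrow> \<exists>j<n. \<exists>x\<in>centres j. y \<in> star_pt j x"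
proof (induction n)
  case 0
  then show ?case by simp
next
  case (Suc n)
  then show ?case unfolding centres_def by (auto, metis less_Suc_eq)
qed

lemma piece_subset: "piece a n \<subseteq> a"
  unfolding piece_def centres_def using star_pt_subset_star4_pt by blast

lemma openin_piece: "openin X (piece a n)"
  unfolding piece_def using openin_star_pt by blast

lemma nonisolated_in_star_pt_centre:
  assumes y: "y \<in> topspace X - isolated_pts X"
  shows "\<exists>j. \<exists>x\<in>centres j. y \<in> star_pt j x"
proof -
  have "nbhd X y (c y)" using c_mem y openin_C by (intro nbhd_openin) auto
  then obtain n where n: "star4_pt n y \<subseteq> c y" using small_star4_pt y by blast
  show ?thesis
  proof (cases "y \<in> claimed n")
    case True
    then show ?thesis using claimed_in_star_pt by blast
  next
    case False
    then have "y \<in> centres n" unfolding centres_def using y n by auto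
    then show ?thesis using mem_star_pt y by blast
  qed
qed

lemma piece_unique:
  assumes "piece a i \<inter> star_pt i y \<noteq> {}" and "piece b i \<inter> star_pt i y \<noteq> {}"
  shows "a = b"
proof -
  obtain x z where x: "x \<in> centres i" "c x = a" "z \<in> star_pt i x" "z \<in> star_pt i y"
    using assms(1) unfolding piece_def by blast
  obtain x' z' where x': "x' \<in> centres i" "c x' = b" "z' \<in> star_pt i x'" "z' \<in> star_pt i y"
    using assms(2) unfolding piece_def by blast
  have "x' \<in> star4_pt i x" "x \<in> star4_pt i x'"
    using star_chain[of z x "G i" y z' x'] star_chain[of z' x' "G i" y z x] x x'
    unfolding star4_pt_def star_pt_def by blast+
  moreover have "star4_pt i x \<subseteq> c x" "star4_pt i x' \<subseteq> c x'" "x \<in> topspace X" "x' \<in> topspace X"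
    using x(1) x'(1) unfolding centres_def by auto
  ultimately have "c x = c x'" using c_coherent by blast
  then show ?thesis using x x' by simp
qed

text \<open>Near a point of the star of a centre, all late pieces vanish, since their
  centres avoid the claimed star.\<close>
lemma late_pieces_vanish:
  assumes y: "y \<in> topspace X - isolated_pts X" and x: "x \<in> centres j" "y \<in> star_pt j x"
  shows "\<exists>W i0. openin X W \<and> y \<in> W \<and> (\<forall>i\<ge>i0. \<forall>a. piece a i \<inter> W = {})"
proof -
  have "nbhd X y (star_pt j x)" using openin_star_pt x(2) by (rule nbhd_openin)
  then obtain V m where V: "nbhd X y V" "star V (G m) \<subseteq> star_pt j x" using strong_G y by blast
  then obtain W where W: "openin X W" "y \<in> W" "W \<subseteq> V" unfolding nbhd_def by blast
  have "piece a i \<inter> W = {}" if i: "i \<ge> max m (Suc j)" for a i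
  proof (rule ccontr)
    assume "piece a i \<inter> W \<noteq> {}"
    then obtain x' w where x': "x' \<in> centres i" "w \<in> star_pt i x'" "w \<in> W"
      unfolding piece_def by blast
    then obtain T where T: "T \<in> G i" "x' \<in> T" "w \<in> T" unfolding star_pt_def star_def by blast
    have "T \<subseteq> star V (G m)" using late_member_subset_star[OF _ T(1)] i T(3) x'(3) W(3) by auto
    then have "x' \<in> claimed (Suc j)" using V(2) T(2) star_pt_centre_claimed[OF x(1)] by blast
    then have "x' \<in> claimed i" using claimed_mono[of "Suc j" i] i by auto
    then show False using x'(1) unfolding centres_def by blast
  qed
  then show ?thesis using W by blast
qed

lemma locally_finite_pieces: "locally_finite_nonisol X pieces"
  unfolding locally_finite_nonisol_def
proof
  fix y assume y: "y \<in> topspace X - isolated_pts X"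
  obtain j x where jx: "x \<in> centres j" "y \<in> star_pt j x"
    using nonisolated_in_star_pt_centre[OF y] by blast
  obtain W i0 where W: "openin X W" "y \<in> W" and far: "\<forall>i\<ge>i0. \<forall>a. piece a i \<inter> W = {}"
    using late_pieces_vanish[OF y jx] by (elim exE conjE)
  define Q where "Q = W \<inter> star_pt i0 y"
  define near where "near i = {piece a i | a. a \<in> \<C> \<and> piece a i \<inter> star_pt i y \<noteq> {}}" for i
  have "{B \<in> pieces. B \<inter> Q \<noteq> {}} \<subseteq> (\<Union>i<i0. near i)"
  proof
    fix B assume "B \<in> {B \<in> pieces. B \<inter> Q \<noteq> {}}"
    then obtain a i where B: "B = piece a i" "a \<in> \<C>" "piece a i \<inter> Q \<noteq> {}"
      unfolding pieces_def by blast
    have i: "i < i0"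
    proof (rule ccontr)
      assume "\<not> i < i0"
      then have "piece a i \<inter> W = {}" using far by simp
      then show False using B(3) unfolding Q_def by blast
    qed
    then have "Q \<subseteq> star_pt i y" unfolding Q_def using star_pt_antimono[of i i0 y] by auto
    then have "B \<in> near i" unfolding near_def using B by blast
    then show "B \<in> (\<Union>i<i0. near i)" using i by blast
  qed
  moreover have "finite (near i)" for i
    unfolding near_def by (rule finite_image_unique) (use piece_unique in blast)
  then have "finite (\<Union>i<i0. near i)" by simp
  ultimately have "finite {B \<in> pieces. B \<inter> Q \<noteq> {}}" by (rule finite_subset)
  moreover have "openin X Q" unfolding Q_def using W(1) openin_star_pt by (rule openin_Int)
  moreover have "y \<in> Q" unfolding Q_def using W(2) mem_star_pt y by auto
  ultimately show "\<exists>Q. openin X Q \<and> y \<in> Q \<and> finite {B \<in> pieces. B \<inter> Q \<noteq> {}}"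
    by (intro exI[of _ Q]) simp
qed

end

lemma (in refining_dev) locally_finite_refinement:
  assumes openin_C: "\<And>U. U \<in> \<C> \<Longrightarrow> openin X U" and covers_C: "topspace X \<subseteq> \<Union>\<C>"
  shows "\<exists>\<R>. (\<forall>B\<in>\<R>. openin X B) \<and> refines \<R> \<C> \<and>
             topspace X - isolated_pts X \<subseteq> \<Union>\<R> \<and> locally_finite_nonisol X \<R>"
proof -
  obtain c where c_in: "\<forall>x\<in>\<Union>\<C>. c x \<in> \<C> \<and> x \<in> c x"
    and c_eq: "\<forall>x x'. x \<in> \<Union>\<C> \<longrightarrow> x' \<in> \<Union>\<C> \<longrightarrow> x' \<in> c x \<longrightarrow> x \<in> c x' \<longrightarrow> c x = c x'"
    using coherent_choice[of \<C>] by (elim exE conjE)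
  interpret stone_refinement X G \<C> c
  proof (intro stone_refinement.intro[OF refining_dev_axioms] stone_refinement_axioms.intro)
    show "openin X U" if "U \<in> \<C>" for U
      using that by (rule openin_C)
    show "c x \<in> \<C> \<and> x \<in> c x" if "x \<in> topspace X" for x
      using c_in that covers_C by blast
    show "c x = c x'" if "x \<in> topspace X" "x' \<in> topspace X" "x' \<in> c x" "x \<in> c x'" for x x'
      using c_eq that covers_C by blast
  qed
  have "\<forall>B\<in>pieces. openin X B" unfolding pieces_def using openin_piece by blast
  moreover have "refines pieces \<C>" unfolding refines_def pieces_def using piece_subset by blast
  moreover have "topspace X - isolated_pts X \<subseteq> \<Union>pieces"
  proof
    fix y assume y: "y \<in> topspace X - isolated_pts X"
    then obtain j x where jx: "x \<in> centres j" "y \<in> star_pt j x"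
      using nonisolated_in_star_pt_centre[OF y] by blast
    then have "y \<in> piece (c x) j" "c x \<in> \<C>"
      unfolding piece_def using c_mem[of x] unfolding centres_def by auto
    then show "y \<in> \<Union>pieces" unfolding pieces_def by blast
  qed
  ultimately show ?thesis using locally_finite_pieces by (intro exI[of _ pieces]) simp
qed


subsection \<open>From a refining strong development to a regular base\<close>

context refining_dev
begin

definition refinement_base :: "(nat \<Rightarrow> 'a set set) \<Rightarrow> 'a set set" where
  "refinement_base \<R> = (\<Union>k. \<R> k) \<union> {{y} | y. y \<in> isolated_pts X}"

lemma is_base_refinement_base:
  assumes open_R: "\<And>k B. B \<in> \<R> k \<Longrightarrow> openin X B" and refines_R: "\<And>k. refines (\<R> k) (G k)"
    and covers_R: "\<And>k. topspace X - isolated_pts X \<subseteq> \<Union>(\<R> k)"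
  shows "is_base X (refinement_base \<R>)"
  unfolding is_base_def
proof (intro conjI ballI allI impI)
  fix B assume "B \<in> refinement_base \<R>"
  then show "openin X B"
    unfolding refinement_base_def using open_R openin_isolated_singleton by auto
next
  fix U x assume Ux: "openin X U \<and> x \<in> U"
  show "\<exists>B\<in>refinement_base \<R>. x \<in> B \<and> B \<subseteq> U"
  proof (cases "x \<in> isolated_pts X")
    case True
    then show ?thesis using Ux unfolding refinement_base_def by blast
  next
    case False
    then have x: "x \<in> topspace X - isolated_pts X" using Ux openin_subset by blast
    have "nbhd X x U" using Ux by (intro nbhd_openin) auto
    then obtain V m where V: "nbhd X x V" "star V (G m) \<subseteq> U" using strong_G[OF x] by blast
    obtain B where B: "B \<in> \<R> m" "x \<in> B" using covers_R x by blast
    then obtain T where T: "T \<in> G m" "B \<subseteq> T" using refines_R unfolding refines_def by blast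
    have "T \<inter> V \<noteq> {}" using T(2) B(2) nbhd_mem[OF V(1)] by blast
    then have "T \<subseteq> star V (G m)" using T(1) by (intro late_member_subset_star) auto
    then have "B \<subseteq> U" using T(2) V(2) by blast
    then show ?thesis using B unfolding refinement_base_def by blast
  qed
qed

text \<open>Regularity: near x only members of the finitely many early refinements can be
  bad, and each of those is locally finite at x.\<close>
lemma regular_at_refinement_base:
  assumes refines_R: "\<And>k. refines (\<R> k) (G k)" and lf_R: "\<And>k. locally_finite_nonisol X (\<R> k)"
    and x: "x \<in> topspace X - isolated_pts X"
  shows "regular_at X (refinement_base \<R>) x"
  unfolding regular_at_def
proof (intro allI impI)
  fix U assume U: "nbhd X x U"
  obtain V0 m where V0: "nbhd X x V0" "star V0 (G m) \<subseteq> U" using strong_G[OF x U] by blast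
  obtain W where W: "openin X W" "x \<in> W" "W \<subseteq> V0" using V0(1) unfolding nbhd_def by blast
  have "\<forall>k. \<exists>Q. openin X Q \<and> x \<in> Q \<and> finite {B \<in> \<R> k. B \<inter> Q \<noteq> {}}"
    using lf_R x unfolding locally_finite_nonisol_def by blast
  then have "\<exists>Q. \<forall>k. openin X (Q k) \<and> x \<in> Q k \<and> finite {B \<in> \<R> k. B \<inter> Q k \<noteq> {}}"
    by (rule choice)
  then obtain Q where "\<forall>k. openin X (Q k) \<and> x \<in> Q k \<and> finite {B \<in> \<R> k. B \<inter> Q k \<noteq> {}}"
    by (elim exE)
  then have Q: "\<And>k. openin X (Q k)" "\<And>k. x \<in> Q k" "\<And>k. finite {B \<in> \<R> k. B \<inter> Q k \<noteq> {}}"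
    by blast+
  define V where "V = W \<inter> (\<Inter>k\<in>{..m}. Q k)"
  have "V0 \<subseteq> \<Union>(G m)" using V0(1) cover_G unfolding nbhd_def by simp
  then have V0_U: "V0 \<subseteq> U" using subset_star V0(2) by blast
  have "openin X (\<Inter>k\<in>{..m}. Q k)" using Q(1) by (intro openin_INT2) auto
  then have V: "openin X V" "x \<in> V" "V \<subseteq> U" "\<And>k. k \<le> m \<Longrightarrow> V \<subseteq> Q k"
    unfolding V_def using W Q(2) V0_U by auto
  have "{B \<in> refinement_base \<R>. B \<inter> V \<noteq> {} \<and> \<not> B \<subseteq> U} \<subseteq> (\<Union>k<m. {B \<in> \<R> k. B \<inter> Q k \<noteq> {}})"
  proof
    fix B assume "B \<in> {B \<in> refinement_base \<R>. B \<inter> V \<noteq> {} \<and> \<not> B \<subseteq> U}"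
    then have BB: "B \<in> refinement_base \<R>" and BV: "B \<inter> V \<noteq> {}" and BU: "\<not> B \<subseteq> U" by auto
    have "B \<notin> {{y} | y. y \<in> isolated_pts X}" using BV BU V(3) by blast
    then obtain k where k: "B \<in> \<R> k" using BB unfolding refinement_base_def by blast
    have "k < m"
    proof (rule ccontr)
      assume "\<not> k < m"
      obtain T where T: "T \<in> G k" "B \<subseteq> T" using k refines_R unfolding refines_def by blast
      have "T \<inter> V0 \<noteq> {}" using T(2) BV W(3) unfolding V_def by blast
      then have "T \<subseteq> star V0 (G m)" using T(1) \<open>\<not> k < m\<close> by (intro late_member_subset_star) auto
      then show False using BU T(2) V0(2) by blast
    qed
    then show "B \<in> (\<Union>k<m. {B \<in> \<R> k. B \<inter> Q k \<noteq> {}})" using k BV V(4)[of k] by auto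
  qed
  moreover have "finite (\<Union>k<m. {B \<in> \<R> k. B \<inter> Q k \<noteq> {}})" using Q(3) by simp
  ultimately have "finite {B \<in> refinement_base \<R>. B \<inter> V \<noteq> {} \<and> \<not> B \<subseteq> U}"
    by (rule finite_subset)
  then show "\<exists>V. openin X V \<and> x \<in> V \<and> V \<subseteq> U \<and>
      finite {B \<in> refinement_base \<R>. B \<inter> V \<noteq> {} \<and> \<not> B \<subseteq> U}"
    using V(1-3) by (intro exI[of _ V]) simp
qed

lemma has_regular_base_nonisol: "has_regular_base_nonisol X"
proof -
  have "\<exists>\<R>. (\<forall>B\<in>\<R>. openin X B) \<and> refines \<R> (G k) \<and>
             topspace X - isolated_pts X \<subseteq> \<Union>\<R> \<and> locally_finite_nonisol X \<R>" for k
    using openin_G cover_G by (intro locally_finite_refinement) auto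
  then have "\<exists>\<R>. \<forall>k. (\<forall>B\<in>\<R> k. openin X B) \<and> refines (\<R> k) (G k) \<and>
             topspace X - isolated_pts X \<subseteq> \<Union>(\<R> k) \<and> locally_finite_nonisol X (\<R> k)"
    by (intro choice allI)
  then obtain \<R> where "\<forall>k. (\<forall>B\<in>\<R> k. openin X B) \<and> refines (\<R> k) (G k) \<and>
             topspace X - isolated_pts X \<subseteq> \<Union>(\<R> k) \<and> locally_finite_nonisol X (\<R> k)"
    by (elim exE)
  then have "is_base X (refinement_base \<R>)"
    and "\<forall>x \<in> topspace X - isolated_pts X. regular_at X (refinement_base \<R>) x"
    by (intro is_base_refinement_base ballI regular_at_refinement_base; blast)+
  then show ?thesis unfolding has_regular_base_nonisol_def by blast
qed

end

lemma strong_dev_imp_regular_base: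
  assumes "has_strong_dev_nonisol X"
  shows "has_regular_base_nonisol X"
proof -
  obtain \<W> where "strong_dev_nonisol X \<W>"
    using assms unfolding has_strong_dev_nonisol_def by blast
  then interpret refining_dev X "meets \<W>" by (rule strong_dev_refining_dev)
  show ?thesis by (rule has_regular_base_nonisol)
qed


theorem mainTheorem5:
  fixes X :: "'a topology"
  assumes "t1_space X"
  shows "has_regular_base_nonisol X \<longleftrightarrow> has_strong_dev_nonisol X"
  using regular_base_imp_strong_dev[OF assms] strong_dev_imp_regular_base by blast

end
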